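(* Let $V$ be a vertex operator algebra and $U$ a $V$-module that decomposes into generalised $L_{[0]}$-eigenspaces $U=\bigoplus_m U_{[m]}$. Suppose that the bracket $[x,y]=x_0y$ on $V_1$ makes $V_1$ a finite-dimensional reductive Lie algebra, so that each $U_{[m]}$ is a $V_1$-module via $a\mapsto a_0$. If $U_{[m]}$ is semisimple over $V_1$, write $U_{[m]}=U_{[m]}^{\mathrm{triv}}\oplus U_{[m]}^{\mathrm{non\text{-}triv}}$ for the unique decomposition into the maximal trivial submodule and its complement consisting of all non-trivial simple summands. Then for every $u\in U_{[m]}^{\mathrm{non\text{-}triv}}$, every $V$-module $W$ and every intertwining operator $\mathcal Y$ of type $\binom{W}{U\ W}$, one has $T^{\mathcal Y}(u,\tau)=0$.
   Context: $V$ has conformal vector $\omega$ and central charge $\mathbf c$; $a_n$ denotes the modes of $Y(a,z)=\sum a_nz^{-n-1}$. Square bracket modes on a module: $Y_U(a,e^z-1)e^{z\,\mathrm{wt}(a)}=\sum a_{[n]}z^{-n-1}$ for homogeneous $a$; $L_{[n]}$ are given by $\sum L_{[n]}z^{-n-2}$ for $a=\omega-\frac{\mathbf c}{24}\mathbf 1$, and $U_{[m]}=\{u:\exists N,(L_{[0]}-m)^Nu=0\}$. For an intertwining operator $\mathcal Y$ of type $\binom{W}{U\ W}$ and $L_0$-homogeneous $u$, $o^{\mathcal Y}(u)$ is the coefficient of $z^{-\mathrm{wt}(u)}$ in $\mathcal Y(u,z)$ (extended linearly), and the torus 1-point function is $T^{\mathcal Y}(u,\tau)=\mathrm{tr}_Wo^{\mathcal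 Y}(u)q^{L_0-\mathbf c/24}$, $q=e^{2\pi i\tau}$. *)

theory Defs
  imports Complex_Main "HOL-Computational_Algebra.Formal_Laurent_Series"
begin

text \<open>Sum of a finitely supported family (the families below are finitely supported
  by the truncation axioms; an infinite support gives 0 by convention of sum).\<close>
definition fsum :: "('i \<Rightarrow> 'b::comm_monoid_add) \<Rightarrow> 'b" where
  "fsum f = sum f {i. f i \<noteq> 0}"

definition fin_dim :: "(complex \<Rightarrow> 'b::ab_group_add \<Rightarrow> 'b) \<Rightarrow> 'b set \<Rightarrow> bool" where
  "fin_dim s S \<longleftrightarrow> module.subspace s S \<and> (\<exists>B. finite B \<and> B \<subseteq> S \<and> module.span s B = S)"

definition gen_eig :: "(complex \<Rightarrow> 'b::ab_group_add \<Rightarrow> 'b) \<Rightarrow> ('b \<Rightarrow> 'b) \<Rightarrow> complex \<Rightarrow> 'b set" where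
  "gen_eig s f lam = {x. \<exists>N. ((\<lambda>y. f y - s lam y) ^^ N) x = 0}"

definition gen_eig_decomp :: "(complex \<Rightarrow> 'b::ab_group_add \<Rightarrow> 'b) \<Rightarrow> ('b \<Rightarrow> 'b) \<Rightarrow> bool" where
  "gen_eig_decomp s f \<longleftrightarrow> (\<forall>x. \<exists>g::complex \<Rightarrow> 'b. finite {lam. g lam \<noteq> 0} \<and>
      (\<forall>lam. g lam \<in> gen_eig s f lam) \<and> x = sum g {lam. g lam \<noteq> 0})"

text \<open>Component of x in the generalised eigenspace for lam (well defined when the
  space decomposes, by uniqueness of the decomposition).\<close>
definition gen_comp :: "(complex \<Rightarrow> 'b::ab_group_add \<Rightarrow> 'b) \<Rightarrow> ('b \<Rightarrow> 'b) \<Rightarrow> 'b \<Rightarrow> complex \<Rightarrow> 'b" where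
  "gen_comp s f x = (THE g. finite {lam. g lam \<noteq> 0} \<and>
      (\<forall>lam. g lam \<in> gen_eig s f lam) \<and> x = sum g {lam. g lam \<noteq> 0})"

definition trace_on :: "(complex \<Rightarrow> 'b::ab_group_add \<Rightarrow> 'b) \<Rightarrow> 'b set \<Rightarrow> ('b \<Rightarrow> 'b) \<Rightarrow> complex" where
  "trace_on s S f = (SOME t. \<exists>B. finite B \<and> \<not> module.dependent s B \<and> module.span s B = S \<and>
       t = (\<Sum>b\<in>B. module.representation s B (f b) b))"

text \<open>Modes: Y a n b is a_n b, where Y(a,z) = sum_n a_n z^(-n-1).\<close>

definition sgn_pow :: "int \<Rightarrow> complex" where
  "sgn_pow r = (if even r then 1 else -1)"

definition is_voa ::
  "(complex \<Rightarrow> 'v::ab_group_add \<Rightarrow> 'v) \<Rightarrow> ('v \<Rightarrow> int \<Rightarrow> 'v \<Rightarrow> 'v) \<Rightarrow> 'v \<Rightarrow> 'v \<Rightarrow> complex \<Rightarrow> bool" where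
  "is_voa s Y vac om c \<longleftrightarrow>
     vector_space s \<and>
     (\<forall>a n. Vector_Spaces.linear s s (Y a n)) \<and>
     (\<forall>n b. Vector_Spaces.linear s s (\<lambda>a. Y a n b)) \<and>
     (\<forall>a b. \<exists>N. \<forall>n\<ge>N. Y a n b = 0) \<and>
     (\<forall>n b. Y vac n b = (if n = -1 then b else 0)) \<and>
     (\<forall>a. Y a (-1) vac = a \<and> (\<forall>n\<ge>0. Y a n vac = 0)) \<and>
     (\<forall>a b v m n r.
        fsum (\<lambda>i::nat. s (of_int m gchoose i) (Y (Y a (r + int i) b) (m + n - int i) v)) =
        fsum (\<lambda>i::nat. s ((-1) ^ i * (of_int r gchoose i))
              (Y a (m + r - int i) (Y b (n + int i) v)
               - s (sgn_pow r) (Y b (n + r - int i) (Y a (m + int i) v))))) \<and>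
     (\<forall>m n v. Y om (m + 1) (Y om (n + 1) v) - Y om (n + 1) (Y om (m + 1) v) =
        s (of_int (m - n)) (Y om (m + n + 1) v)
        + (if m + n = 0 then s ((of_int m ^ 3 - of_int m) / 12 * c) v else 0)) \<and>
     (\<forall>a n v. Y (Y om 0 a) n v = s (- of_int n) (Y a (n - 1) v)) \<and>
     (\<forall>v. \<exists>g::int \<Rightarrow> 'v. finite {n. g n \<noteq> 0} \<and> (\<forall>n. Y om 1 (g n) = s (of_int n) (g n)) \<and>
          v = sum g {n. g n \<noteq> 0}) \<and>
     (\<forall>n::int. fin_dim s {v. Y om 1 v = s (of_int n) v}) \<and>
     (\<exists>N::int. \<forall>n<N. \<forall>v. Y om 1 v = s (of_int n) v \<longrightarrow> v = 0)"

text \<open>Weak V-module (Jacobi identity in Borcherds component form).\<close>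
definition is_weak_module ::
  "(complex \<Rightarrow> 'v::ab_group_add \<Rightarrow> 'v) \<Rightarrow> ('v \<Rightarrow> int \<Rightarrow> 'v \<Rightarrow> 'v) \<Rightarrow> 'v \<Rightarrow>
   (complex \<Rightarrow> 'w::ab_group_add \<Rightarrow> 'w) \<Rightarrow> ('v \<Rightarrow> int \<Rightarrow> 'w \<Rightarrow> 'w) \<Rightarrow> bool" where
  "is_weak_module s Y vac sW YW \<longleftrightarrow>
     vector_space sW \<and>
     (\<forall>a n. Vector_Spaces.linear sW sW (YW a n)) \<and>
     (\<forall>n w. Vector_Spaces.linear s sW (\<lambda>a. YW a n w)) \<and>
     (\<forall>a w. \<exists>N. \<forall>n\<ge>N. YW a n w = 0) \<and>
     (\<forall>n w. YW vac n w = (if n = -1 then w else 0)) \<and>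
     (\<forall>a b w m n r.
        fsum (\<lambda>i::nat. sW (of_int m gchoose i) (YW (Y a (r + int i) b) (m + n - int i) w)) =
        fsum (\<lambda>i::nat. sW ((-1) ^ i * (of_int r gchoose i))
              (YW a (m + r - int i) (YW b (n + int i) w)
               - sW (sgn_pow r) (YW b (n + r - int i) (YW a (m + int i) w)))))"

text \<open>V-module: a weak module which is the direct sum of finite-dimensional generalised
  L_0-eigenspaces, lower bounded in each coset of the integers (grading-restricted
  generalised module).\<close>
definition is_module ::
  "(complex \<Rightarrow> 'v::ab_group_add \<Rightarrow> 'v) \<Rightarrow> ('v \<Rightarrow> int \<Rightarrow> 'v \<Rightarrow> 'v) \<Rightarrow> 'v \<Rightarrow> 'v \<Rightarrow>
   (complex \<Rightarrow> 'w::ab_group_add \<Rightarrow> 'w) \<Rightarrow> ('v \<Rightarrow> int \<Rightarrow> 'w \<Rightarrow> 'w) \<Rightarrow> bool" where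
  "is_module s Y vac om sW YW \<longleftrightarrow>
     is_weak_module s Y vac sW YW \<and>
     gen_eig_decomp sW (YW om 1) \<and>
     (\<forall>lam. fin_dim sW (gen_eig sW (YW om 1) lam)) \<and>
     (\<forall>lam. \<exists>K. \<forall>k\<ge>K. gen_eig sW (YW om 1) (lam - of_nat k) = {0})"

text \<open>Intertwining operator of type (W over U W): I u n w = u_(n) w,
  where Y(u,z) = sum over complex n of u_(n) z^(-n-1).\<close>
definition is_intertwining ::
  "(complex \<Rightarrow> 'v::ab_group_add \<Rightarrow> 'v) \<Rightarrow> ('v \<Rightarrow> int \<Rightarrow> 'v \<Rightarrow> 'v) \<Rightarrow> 'v \<Rightarrow> 'v \<Rightarrow>
   (complex \<Rightarrow> 'u::ab_group_add \<Rightarrow> 'u) \<Rightarrow> ('v \<Rightarrow> int \<Rightarrow> 'u \<Rightarrow> 'u) \<Rightarrow>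
   (complex \<Rightarrow> 'w::ab_group_add \<Rightarrow> 'w) \<Rightarrow> ('v \<Rightarrow> int \<Rightarrow> 'w \<Rightarrow> 'w) \<Rightarrow>
   ('u \<Rightarrow> complex \<Rightarrow> 'w \<Rightarrow> 'w) \<Rightarrow> bool" where
  "is_intertwining s Y vac om sU YU sW YW I \<longleftrightarrow>
     (\<forall>u n. Vector_Spaces.linear sW sW (I u n)) \<and>
     (\<forall>n w. Vector_Spaces.linear sU sW (\<lambda>u. I u n w)) \<and>
     (\<forall>u w n. \<exists>K. \<forall>k\<ge>K. I u (n + of_nat k) w = 0) \<and>
     (\<forall>a u w m r (n::complex).
        fsum (\<lambda>i::nat. sW (of_int m gchoose i) (I (YU a (r + int i) u) (of_int m + n - of_nat i) w)) =
        fsum (\<lambda>i::nat. sW ((-1) ^ i * (of_int r gchoose i))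
              (YW a (m + r - int i) (I u (n + of_nat i) w)
               - sW (sgn_pow r) (I u (n + of_int r - of_nat i) (YW a (m + int i) w))))) \<and>
     (\<forall>u n w. I (YU om 0 u) n w = sW (- n) (I u (n - 1) w))"

definition sq_coeff :: "int \<Rightarrow> int \<Rightarrow> complex \<Rightarrow> complex" where
  "sq_coeff n k w = fls_nth ((fps_to_fls (fps_exp 1 - 1)) powi (- n - 1) * fps_to_fls (fps_exp w)) (- k - 1)"

text \<open>a_[k] for homogeneous a of weight wt: Y_U(a, e^z - 1) e^(z wt) = sum_k a_[k] z^(-k-1).\<close>
definition sq_mode :: "(complex \<Rightarrow> 'u::ab_group_add \<Rightarrow> 'u) \<Rightarrow> ('v \<Rightarrow> int \<Rightarrow> 'u \<Rightarrow> 'u) \<Rightarrow>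
    'v \<Rightarrow> complex \<Rightarrow> int \<Rightarrow> 'u \<Rightarrow> 'u" where
  "sq_mode sU YU a wt k u = fsum (\<lambda>n::int. sU (sq_coeff n k wt) (YU a n u))"

text \<open>L_[n] is the coefficient of z^(-n-2) for a = omega - c/24 vac (omega of weight 2,
  vac of weight 0), i.e. L_[n] = omega_[n+1] - c/24 vac_[n+1].\<close>
definition L_sq :: "(complex \<Rightarrow> 'u::ab_group_add \<Rightarrow> 'u) \<Rightarrow> ('v \<Rightarrow> int \<Rightarrow> 'u \<Rightarrow> 'u) \<Rightarrow>
    'v \<Rightarrow> 'v \<Rightarrow> complex \<Rightarrow> int \<Rightarrow> 'u \<Rightarrow> 'u" where
  "L_sq sU YU vac om c n u = sq_mode sU YU om 2 (n + 1) u - sU (c / 24) (sq_mode sU YU vac 0 (n + 1) u)"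

definition U_sq :: "(complex \<Rightarrow> 'u::ab_group_add \<Rightarrow> 'u) \<Rightarrow> ('v \<Rightarrow> int \<Rightarrow> 'u \<Rightarrow> 'u) \<Rightarrow>
    'v \<Rightarrow> 'v \<Rightarrow> complex \<Rightarrow> complex \<Rightarrow> 'u set" where
  "U_sq sU YU vac om c m = gen_eig sU (L_sq sU YU vac om c 0) m"

text \<open>Zero mode o(u): for L_0-homogeneous u of weight wt, the coefficient of z^(-wt)
  in Y(u,z), i.e. u_(wt-1); extended linearly along the decomposition of u into
  generalised L_0-eigenvectors.\<close>
definition zero_mode :: "(complex \<Rightarrow> 'u::ab_group_add \<Rightarrow> 'u) \<Rightarrow> ('v \<Rightarrow> int \<Rightarrow> 'u \<Rightarrow> 'u) \<Rightarrow> 'v \<Rightarrow>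
    ('u \<Rightarrow> complex \<Rightarrow> 'w::ab_group_add \<Rightarrow> 'w) \<Rightarrow> 'u \<Rightarrow> 'w \<Rightarrow> 'w" where
  "zero_mode sU YU om I u w =
     (\<Sum>lam\<in>{lam. gen_comp sU (YU om 1) u lam \<noteq> 0}. I (gen_comp sU (YU om 1) u lam) (lam - 1) w)"

text \<open>q^(L_0 - c/24) with q = e^(2 pi i tau) on the generalised eigenspace W_[lam]:
  e^(2 pi i tau (lam - c/24)) exp(2 pi i tau (L_0 - lam)), the latter being nilpotent.\<close>
definition q_op :: "(complex \<Rightarrow> 'w::ab_group_add \<Rightarrow> 'w) \<Rightarrow> ('w \<Rightarrow> 'w) \<Rightarrow> complex \<Rightarrow>
    complex \<Rightarrow> complex \<Rightarrow> 'w \<Rightarrow> 'w" where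
  "q_op sW L0 c tau lam w =
     sW (exp (2 * pi * \<i> * tau * (lam - c / 24)))
       (fsum (\<lambda>k::nat. sW ((2 * pi * \<i> * tau) ^ k / fact k) (((\<lambda>y. L0 y - sW lam y) ^^ k) w)))"

text \<open>T^I(u,tau) = tr_W o(u) q^(L_0 - c/24) vanishes: as a (generalised) q-series, all
  its graded pieces tr_{W_[lam]} o(u) q^(L_0-c/24) vanish identically in tau.\<close>
definition torus_1pt_zero :: "(complex \<Rightarrow> 'u::ab_group_add \<Rightarrow> 'u) \<Rightarrow> ('v \<Rightarrow> int \<Rightarrow> 'u \<Rightarrow> 'u) \<Rightarrow>
    'v \<Rightarrow> complex \<Rightarrow> (complex \<Rightarrow> 'w::ab_group_add \<Rightarrow> 'w) \<Rightarrow> ('v \<Rightarrow> int \<Rightarrow> 'w \<Rightarrow> 'w) \<Rightarrow>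
    ('u \<Rightarrow> complex \<Rightarrow> 'w \<Rightarrow> 'w) \<Rightarrow> 'u \<Rightarrow> bool" where
  "torus_1pt_zero sU YU om c sW YW I u \<longleftrightarrow>
     (\<forall>lam tau. trace_on sW (gen_eig sW (YW om 1) lam)
        (\<lambda>w. zero_mode sU YU om I u (q_op sW (YW om 1) c tau lam w)) = 0)"

definition V1 :: "('v \<Rightarrow> int \<Rightarrow> 'v \<Rightarrow> 'v) \<Rightarrow> (complex \<Rightarrow> 'v \<Rightarrow> 'v) \<Rightarrow> 'v \<Rightarrow> 'v set" where
  "V1 Y s om = {v. Y om 1 v = s 1 v}"

definition is_submod :: "(complex \<Rightarrow> 'b::ab_group_add \<Rightarrow> 'b) \<Rightarrow> 'a set \<Rightarrow> ('a \<Rightarrow> 'b \<Rightarrow> 'b) \<Rightarrow> 'b set \<Rightarrow> bool" where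
  "is_submod s A act S \<longleftrightarrow> module.subspace s S \<and> (\<forall>a\<in>A. \<forall>x\<in>S. act a x \<in> S)"

definition is_simple_submod :: "(complex \<Rightarrow> 'b::ab_group_add \<Rightarrow> 'b) \<Rightarrow> 'a set \<Rightarrow> ('a \<Rightarrow> 'b \<Rightarrow> 'b) \<Rightarrow> 'b set \<Rightarrow> bool" where
  "is_simple_submod s A act S \<longleftrightarrow> is_submod s A act S \<and> S \<noteq> {0} \<and>
     (\<forall>T. is_submod s A act T \<and> T \<subseteq> S \<longrightarrow> T = {0} \<or> T = S)"

definition is_semisimple :: "(complex \<Rightarrow> 'b::ab_group_add \<Rightarrow> 'b) \<Rightarrow> 'a set \<Rightarrow> ('a \<Rightarrow> 'b \<Rightarrow> 'b) \<Rightarrow> 'b set \<Rightarrow> bool" where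
  "is_semisimple s A act M \<longleftrightarrow> is_submod s A act M \<and>
     module.span s (\<Union>{S. is_simple_submod s A act S \<and> S \<subseteq> M}) = M"

text \<open>Lie algebra structure [x,y] = x_0 y on V_1, reductive = adjoint representation
  semisimple, finite-dimensional.\<close>
definition V1_reductive_lie :: "(complex \<Rightarrow> 'v::ab_group_add \<Rightarrow> 'v) \<Rightarrow> ('v \<Rightarrow> int \<Rightarrow> 'v \<Rightarrow> 'v) \<Rightarrow> 'v \<Rightarrow> bool" where
  "V1_reductive_lie s Y om \<longleftrightarrow>
     fin_dim s (V1 Y s om) \<and>
     (\<forall>x\<in>V1 Y s om. \<forall>y\<in>V1 Y s om. Y x 0 y \<in> V1 Y s om) \<and>
     (\<forall>x\<in>V1 Y s om. \<forall>y\<in>V1 Y s om. Y x 0 y = - Y y 0 x) \<and>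
     (\<forall>x\<in>V1 Y s om. \<forall>y\<in>V1 Y s om. \<forall>z\<in>V1 Y s om.
        Y x 0 (Y y 0 z) + Y y 0 (Y z 0 x) + Y z 0 (Y x 0 y) = 0) \<and>
     is_semisimple s (V1 Y s om) (\<lambda>x y. Y x 0 y) (V1 Y s om)"

definition nontriv_part :: "(complex \<Rightarrow> 'b::ab_group_add \<Rightarrow> 'b) \<Rightarrow> 'a set \<Rightarrow> ('a \<Rightarrow> 'b \<Rightarrow> 'b) \<Rightarrow> 'b set \<Rightarrow> 'b set" where
  "nontriv_part s A act M = module.span s (\<Union>{S. is_simple_submod s A act S \<and> S \<subseteq> M \<and>
      (\<exists>a\<in>A. \<exists>x\<in>S. act a x \<noteq> 0)})"

definition triv_part :: "'a set \<Rightarrow> ('a \<Rightarrow> 'b::zero \<Rightarrow> 'b) \<Rightarrow> 'b set \<Rightarrow> 'b set" where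
  "triv_part A act M = {x\<in>M. \<forall>a\<in>A. act a x = 0}"

end

theory Submission
  imports Defs
begin

(* Every vector of a non-trivial simple V_1-submodule S lies in V_1.U = span {a_0 y}: the
  span of the a_0 x with x in S is a submodule (a_0 b_0 - b_0 a_0 = (a_0 b)_0), it is non-zero,
  hence equal to S. As a_0 commutes with L_0 for a in V_1, every generalised L_0-component of
  such a u lies again in V_1.U_(lam). The Jacobi identity gives o(a_0 y) = [a_0, o(y)] on each
  W_[lam], and a_0 commutes with q^(L_0), so every graded piece of T(u, tau) is the trace of a
  commutator on a finite-dimensional space and vanishes. *)

lemmas linear_map_add = module_hom.add[OF linear_iff_module_hom[THEN iffD1]]
lemmas linear_map_scale = module_hom.scale[OF linear_iff_module_hom[THEN iffD1]]
lemmas linear_map_zero = module_hom.zero[OF linear_iff_module_hom[THEN iffD1]]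
lemmas linear_map_diff = module_hom.diff[OF linear_iff_module_hom[THEN iffD1]]
lemmas linear_map_sum = module_hom.sum[OF linear_iff_module_hom[THEN iffD1]]

lemma fsum_eq_sum: "finite F \<Longrightarrow> (\<And>i. i \<notin> F \<Longrightarrow> f i = 0) \<Longrightarrow> fsum f = sum f F"
  unfolding fsum_def by (rule sum.mono_neutral_left) auto

section \<open>Generalised eigenspaces\<close>

definition eig_shift :: "('a::field \<Rightarrow> 'b::ab_group_add \<Rightarrow> 'b) \<Rightarrow> ('b \<Rightarrow> 'b) \<Rightarrow> 'a \<Rightarrow> 'b \<Rightarrow> 'b" where
  "eig_shift s f lam y = f y - s lam y"

lemma gen_eig_eig_shift: "gen_eig s f lam = {x. \<exists>N. (eig_shift s f lam ^^ N) x = 0}"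
  by (simp add: gen_eig_def eig_shift_def[abs_def])

context vector_space
begin

lemma linear_eig_shift:
  assumes "Vector_Spaces.linear scale scale f"
  shows "Vector_Spaces.linear scale scale (eig_shift scale f lam)"
  using assms vector_space_axioms unfolding Vector_Spaces.linear_iff eig_shift_def
  by (simp add: algebra_simps scale_right_diff_distrib)

lemma linear_eig_shift_pow:
  assumes "Vector_Spaces.linear scale scale f"
  shows "Vector_Spaces.linear scale scale (eig_shift scale f lam ^^ N)"
proof (induction N)
  case 0
  show ?case using linear_id by (simp add: id_def)
next
  case (Suc N)
  show ?case
    unfolding funpow.simps(2) by (rule Vector_Spaces.linear_compose[OF Suc linear_eig_shift[OF assms]])
qed

lemma eig_shift_commute:
  assumes "Vector_Spaces.linear scale scale T" "\<And>y. T (f y) = f (T y)"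
  shows "T (eig_shift scale f lam x) = eig_shift scale f lam (T x)"
  using assms by (simp add: eig_shift_def linear_map_diff linear_map_scale)

lemma eig_shift_pow_commute:
  assumes "Vector_Spaces.linear scale scale T" "\<And>y. T (f y) = f (T y)"
  shows "T ((eig_shift scale f lam ^^ N) x) = (eig_shift scale f lam ^^ N) (T x)"
  by (induction N) (simp_all add: eig_shift_commute[of T f, OF assms])

lemma eig_shift_pow_vanish_mono:
  assumes "Vector_Spaces.linear scale scale f" "(eig_shift scale f lam ^^ N) x = 0" "N \<le> K"
  shows "(eig_shift scale f lam ^^ K) x = 0"
proof -
  have "(eig_shift scale f lam ^^ K) x = (eig_shift scale f lam ^^ (K - N)) ((eig_shift scale f lam ^^ N) x)"
    using \<open>N \<le> K\<close> by (simp flip: funpow_add[unfolded comp_def, THEN fun_cong])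
  then show ?thesis using assms linear_map_zero[OF linear_eig_shift_pow] by simp
qed

end

locale complex_vector_space = vector_space s for s :: "complex \<Rightarrow> 'b::ab_group_add \<Rightarrow> 'b"
begin

lemma subspace_gen_eig:
  assumes f: "Vector_Spaces.linear s s f"
  shows "subspace (gen_eig s f lam)"
  unfolding subspace_def gen_eig_eig_shift
proof (intro conjI ballI allI; clarsimp)
  show "\<exists>N. (eig_shift s f lam ^^ N) 0 = 0"
    using linear_map_zero[OF linear_eig_shift_pow[OF f]] by blast
next
  fix x y N M
  assume "(eig_shift s f lam ^^ N) x = 0" "(eig_shift s f lam ^^ M) y = 0"
  then have "(eig_shift s f lam ^^ (N + M)) x = 0" "(eig_shift s f lam ^^ (N + M)) y = 0"
    using eig_shift_pow_vanish_mono[OF f] le_add1 le_add2 by blast+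
  then have "(eig_shift s f lam ^^ (N + M)) (x + y) = 0"
    by (simp add: linear_map_add[OF linear_eig_shift_pow[OF f]])
  then show "\<exists>K. (eig_shift s f lam ^^ K) (x + y) = 0" ..
next
  fix c x N
  assume "(eig_shift s f lam ^^ N) x = 0"
  then have "(eig_shift s f lam ^^ N) (s c x) = 0"
    by (simp add: linear_map_scale[OF linear_eig_shift_pow[OF f]])
  then show "\<exists>K. (eig_shift s f lam ^^ K) (s c x) = 0" ..
qed

lemma gen_eig_invariant:
  assumes "Vector_Spaces.linear s s T" "\<And>y. T (f y) = f (T y)" "x \<in> gen_eig s f lam"
  shows "T x \<in> gen_eig s f lam"
proof -
  obtain N where "(eig_shift s f lam ^^ N) x = 0"
    using assms(3) unfolding gen_eig_eig_shift by blast
  then have "(eig_shift s f lam ^^ N) (T x) = 0"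
    by (simp add: flip: eig_shift_pow_commute[of T f, OF assms(1,2)] add: linear_map_zero[OF assms(1)])
  then show ?thesis
    unfolding gen_eig_eig_shift by blast
qed

lemma eig_shift_pow_eigenvector:
  assumes "Vector_Spaces.linear s s f" "f x = s mu x"
  shows "(eig_shift s f lam ^^ N) x = s ((mu - lam) ^ N) x"
proof (induction N)
  case (Suc N)
  then show ?case
    using assms by (simp add: eig_shift_def linear_map_scale[OF assms(1)] algebra_simps)
qed simp

lemma gen_eig_eig_shift_pow_eq_0:
  assumes f: "Vector_Spaces.linear s s f" and "lam \<noteq> mu"
  shows "x \<in> gen_eig s f lam \<Longrightarrow> (eig_shift s f mu ^^ K) x = 0 \<Longrightarrow> x = 0"
proof (induction K arbitrary: x)
  case 0
  then show ?case by simp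
next
  case (Suc K)
  have shift_commute: "eig_shift s f mu (f y) = f (eig_shift s f mu y)" for y
    by (simp add: eig_shift_def linear_map_diff[OF f] linear_map_scale[OF f])
  have "eig_shift s f mu x \<in> gen_eig s f lam"
    by (rule gen_eig_invariant[OF linear_eig_shift[OF f] shift_commute Suc.prems(1)])
  moreover have "(eig_shift s f mu ^^ K) (eig_shift s f mu x) = 0"
    using Suc.prems(2) unfolding funpow_Suc_right comp_apply .
  ultimately have "eig_shift s f mu x = 0"
    using Suc.IH by blast
  then have "f x = s mu x"
    by (simp add: eig_shift_def)
  moreover obtain N where "(eig_shift s f lam ^^ N) x = 0"
    using Suc.prems(1) unfolding gen_eig_eig_shift by blast
  ultimately have "s ((mu - lam) ^ N) x = 0"
    using eig_shift_pow_eigenvector[OF f] by metis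
  then show ?case
    using \<open>lam \<noteq> mu\<close> by simp
qed

lemma gen_eig_sum_eq_0:
  assumes f: "Vector_Spaces.linear s s f"
  shows "finite F \<Longrightarrow> (\<And>lam. lam \<in> F \<Longrightarrow> g lam \<in> gen_eig s f lam) \<Longrightarrow> sum g F = 0 \<Longrightarrow>
    lam \<in> F \<Longrightarrow> g lam = 0"
proof (induction F arbitrary: g lam rule: finite_induct)
  case empty
  then show ?case by simp
next
  case (insert mu F)
  obtain K where K: "(eig_shift s f mu ^^ K) (g mu) = 0"
    using insert.prems(1) unfolding gen_eig_eig_shift by blast
  let ?D = "eig_shift s f mu ^^ K"
  have D: "Vector_Spaces.linear s s ?D" by (rule linear_eig_shift_pow[OF f])
  have D_commute: "?D (f y) = f (?D y)" for y
    using eig_shift_pow_commute[of f f, OF f] by simp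
  have "(\<Sum>l\<in>F. ?D (g l)) = ?D (sum g (insert mu F))"
    using insert.hyps K by (simp add: linear_map_add[OF D] linear_map_sum[OF D])
  then have sum_D: "(\<Sum>l\<in>F. ?D (g l)) = 0"
    using insert.prems(2) linear_map_zero[OF D] by simp
  have gF: "g l = 0" if l: "l \<in> F" for l
  proof -
    have g_l: "g l \<in> gen_eig s f l"
      using insert.prems(1) l by blast
    have "?D (g l') \<in> gen_eig s f l'" if "l' \<in> F" for l'
      using gen_eig_invariant[of ?D f, OF D D_commute] insert.prems(1) that by blast
    then have "?D (g l) = 0"
      using insert.IH[of "\<lambda>l. ?D (g l)", OF _ sum_D l] by blast
    moreover have "l \<noteq> mu"
      using insert.hyps(2) l by blast
    ultimately show ?thesis
      using gen_eig_eig_shift_pow_eq_0[OF f _ g_l] by blast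
  qed
  then have "g mu = 0"
    using insert.prems(2) insert.hyps by simp
  then show ?case
    using gF insert.prems(3) by blast
qed

definition gen_eig_components :: "('b \<Rightarrow> 'b) \<Rightarrow> (complex \<Rightarrow> 'b) \<Rightarrow> 'b \<Rightarrow> bool" where
  "gen_eig_components f g x \<longleftrightarrow> finite {lam. g lam \<noteq> 0} \<and> (\<forall>lam. g lam \<in> gen_eig s f lam) \<and>
     x = sum g {lam. g lam \<noteq> 0}"

lemma gen_eig_componentsI:
  assumes "finite F" "\<And>lam. g lam \<in> gen_eig s f lam" "\<And>lam. lam \<notin> F \<Longrightarrow> g lam = 0" "x = sum g F"
  shows "gen_eig_components f g x"
proof -
  have supp: "{lam. g lam \<noteq> 0} \<subseteq> F"
    using assms(3) by blast
  have "sum g F = sum g {lam. g lam \<noteq> 0}"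
    by (rule sum.mono_neutral_right[OF assms(1) supp]) auto
  then show ?thesis
    unfolding gen_eig_components_def using assms(2,4) finite_subset[OF supp assms(1)] by simp
qed

lemma gen_eig_components_sum:
  assumes "gen_eig_components f g x" "finite F" "{lam. g lam \<noteq> 0} \<subseteq> F"
  shows "x = sum g F"
proof -
  have "sum g {lam. g lam \<noteq> 0} = sum g F"
    by (rule sum.mono_neutral_left[OF assms(2,3)]) auto
  then show ?thesis
    using assms(1) unfolding gen_eig_components_def by simp
qed

lemma gen_eig_components_unique:
  assumes f: "Vector_Spaces.linear s s f"
    and g: "gen_eig_components f g x" and h: "gen_eig_components f h x"
  shows "g = h"
proof
  fix lam
  let ?F = "{lam. g lam \<noteq> 0} \<union> {lam. h lam \<noteq> 0}"
  have F: "finite ?F"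
    using g h unfolding gen_eig_components_def by auto
  have "sum (\<lambda>l. g l - h l) ?F = 0"
    using gen_eig_components_sum[OF g F] gen_eig_components_sum[OF h F] by (simp add: sum_subtractf)
  moreover have "g l - h l \<in> gen_eig s f l" for l
    using g h subspace_diff[OF subspace_gen_eig[OF f]] unfolding gen_eig_components_def by blast
  ultimately have "g l - h l = 0" if "l \<in> ?F" for l
    using gen_eig_sum_eq_0[OF f F, of "\<lambda>l. g l - h l"] that by blast
  then show "g lam = h lam"
    by (cases "lam \<in> ?F") auto
qed

lemma gen_comp_components:
  assumes f: "Vector_Spaces.linear s s f" and "gen_eig_decomp s f"
  shows "gen_eig_components f (gen_comp s f x) x"
proof -
  obtain g where g: "gen_eig_components f g x"
    using assms(2) unfolding gen_eig_decomp_def gen_eig_components_def by blast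
  have "gen_eig_components f (THE g. gen_eig_components f g x) x"
    using theI[of "\<lambda>g. gen_eig_components f g x", OF g] gen_eig_components_unique[OF f _ g] by blast
  then show ?thesis
    unfolding gen_comp_def gen_eig_components_def .
qed

lemma gen_comp_eqI:
  assumes "Vector_Spaces.linear s s f" "gen_eig_decomp s f" "gen_eig_components f g x"
  shows "gen_comp s f x = g"
  using gen_eig_components_unique[OF assms(1) gen_comp_components[OF assms(1,2)] assms(3)] .

lemma gen_comp_in_gen_eig:
  assumes "Vector_Spaces.linear s s f" "gen_eig_decomp s f"
  shows "gen_comp s f x lam \<in> gen_eig s f lam"
  using gen_comp_components[OF assms] unfolding gen_eig_components_def by blast

lemma gen_comp_add:
  assumes f: "Vector_Spaces.linear s s f" and dec: "gen_eig_decomp s f"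
  shows "gen_comp s f (x + y) lam = gen_comp s f x lam + gen_comp s f y lam"
proof -
  let ?g = "gen_comp s f x" and ?h = "gen_comp s f y"
  have gx: "gen_eig_components f ?g x" and hy: "gen_eig_components f ?h y"
    using gen_comp_components[OF f dec] by auto
  let ?F = "{lam. ?g lam \<noteq> 0} \<union> {lam. ?h lam \<noteq> 0}"
  have F: "finite ?F"
    using gx hy unfolding gen_eig_components_def by auto
  have "gen_eig_components f (\<lambda>l. ?g l + ?h l) (x + y)"
  proof (rule gen_eig_componentsI[OF F])
    show "?g l + ?h l \<in> gen_eig s f l" for l
      using subspace_add[OF subspace_gen_eig[OF f]] gen_comp_in_gen_eig[OF f dec] by blast
    show "x + y = (\<Sum>l\<in>?F. ?g l + ?h l)"
      using gen_eig_components_sum[OF gx F] gen_eig_components_sum[OF hy F] by (simp add: sum.distrib)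
  qed auto
  then show ?thesis
    using gen_comp_eqI[OF f dec] by metis
qed

lemma gen_comp_commute:
  assumes f: "Vector_Spaces.linear s s f" and dec: "gen_eig_decomp s f"
    and T: "Vector_Spaces.linear s s T" and T_commute: "\<And>y. T (f y) = f (T y)"
  shows "gen_comp s f (T x) lam = T (gen_comp s f x lam)"
proof -
  let ?g = "gen_comp s f x"
  have gx: "gen_eig_components f ?g x"
    using gen_comp_components[OF f dec] by auto
  let ?F = "{lam. ?g lam \<noteq> 0}"
  have F: "finite ?F"
    using gx unfolding gen_eig_components_def by auto
  have "gen_eig_components f (\<lambda>l. T (?g l)) (T x)"
  proof (rule gen_eig_componentsI[OF F])
    show "T (?g l) \<in> gen_eig s f l" for l
      by (rule gen_eig_invariant[of T f, OF T T_commute gen_comp_in_gen_eig[OF f dec]])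
    show "l \<notin> ?F \<Longrightarrow> T (?g l) = 0" for l
      using linear_map_zero[OF T] by auto
    have "T x = T (sum ?g ?F)"
      using gen_eig_components_sum[OF gx F subset_refl] by (rule arg_cong)
    then show "T x = (\<Sum>l\<in>?F. T (?g l))"
      by (simp add: linear_map_sum[OF T])
  qed
  then show ?thesis
    using gen_comp_eqI[OF f dec] by metis
qed

lemma linear_gen_comp:
  assumes f: "Vector_Spaces.linear s s f" and dec: "gen_eig_decomp s f"
  shows "Vector_Spaces.linear s s (\<lambda>x. gen_comp s f x lam)"
  unfolding Vector_Spaces.linear_iff
proof (intro conjI allI)
  show "gen_comp s f (s c x) lam = s c (gen_comp s f x lam)" for c x
    by (rule gen_comp_commute[OF f dec linear_scale_self]) (simp add: linear_map_scale[OF f])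
qed (simp_all add: vector_space_axioms gen_comp_add[OF f dec])

lemma gen_eig_common_exponent:
  assumes f: "Vector_Spaces.linear s s f" and "finite B" "B \<subseteq> gen_eig s f lam"
  obtains N where "\<And>b. b \<in> B \<Longrightarrow> (eig_shift s f lam ^^ N) b = 0"
proof -
  have "\<forall>b\<in>B. \<exists>N. (eig_shift s f lam ^^ N) b = 0"
    using assms(3) unfolding gen_eig_eig_shift by blast
  then obtain Nb where Nb: "\<forall>b\<in>B. (eig_shift s f lam ^^ Nb b) b = 0"
    by (rule bchoice[THEN exE])
  have "(eig_shift s f lam ^^ (\<Sum>b\<in>B. Nb b)) b = 0" if "b \<in> B" for b
  proof (rule eig_shift_pow_vanish_mono[OF f])
    show "(eig_shift s f lam ^^ Nb b) b = 0"
      using Nb that by blast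
    show "Nb b \<le> (\<Sum>b\<in>B. Nb b)"
      using that assms(2) by (simp add: member_le_sum)
  qed
  then show ?thesis
    by (rule that)
qed

end

section \<open>Traces\<close>

definition basis_trace :: "('a::field \<Rightarrow> 'b::ab_group_add \<Rightarrow> 'b) \<Rightarrow> 'b set \<Rightarrow> ('b \<Rightarrow> 'b) \<Rightarrow> 'a" where
  "basis_trace s B f = (\<Sum>b\<in>B. module.representation s B (f b) b)"

context vector_space
begin

lemma basis_trace_cong: "(\<And>b. b \<in> B \<Longrightarrow> f b = g b) \<Longrightarrow> basis_trace scale B f = basis_trace scale B g"
  unfolding basis_trace_def by simp

lemma basis_trace_sum:
  assumes "independent B" "\<And>i b. i \<in> I \<Longrightarrow> b \<in> B \<Longrightarrow> h i b \<in> span B"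
  shows "basis_trace scale B (\<lambda>x. \<Sum>i\<in>I. h i x) = (\<Sum>i\<in>I. basis_trace scale B (h i))"
  unfolding basis_trace_def using assms by (simp add: representation_sum sum.swap[of _ B])

lemma basis_trace_add:
  assumes "independent B" "\<And>b. b \<in> B \<Longrightarrow> f b \<in> span B" "\<And>b. b \<in> B \<Longrightarrow> g b \<in> span B"
  shows "basis_trace scale B (\<lambda>x. f x + g x) = basis_trace scale B f + basis_trace scale B g"
  unfolding basis_trace_def using assms by (simp add: representation_add sum.distrib)

lemma basis_trace_scale:
  assumes "independent B" "\<And>b. b \<in> B \<Longrightarrow> f b \<in> span B"
  shows "basis_trace scale B (\<lambda>x. scale c (f x)) = c * basis_trace scale B f"
  unfolding basis_trace_def using assms by (simp add: representation_scale sum_distrib_left)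

lemma basis_trace_diff:
  assumes "independent B" "\<And>b. b \<in> B \<Longrightarrow> f b \<in> span B" "\<And>b. b \<in> B \<Longrightarrow> g b \<in> span B"
  shows "basis_trace scale B (\<lambda>x. f x - g x) = basis_trace scale B f - basis_trace scale B g"
  unfolding basis_trace_def using assms by (simp add: representation_diff sum_subtractf)

lemma linear_map_span_invariant:
  assumes A: "Vector_Spaces.linear scale scale A" and AB: "\<And>b. b \<in> B \<Longrightarrow> A b \<in> span B"
    and "x \<in> span B"
  shows "A x \<in> span B"
  using \<open>x \<in> span B\<close>
  by (induction rule: span_induct_alt)
    (simp_all add: linear_map_zero[OF A] linear_map_add[OF A] linear_map_scale[OF A] AB
      span_zero span_add span_scale)

lemma representation_linear_image:
  assumes B: "finite B" "independent B" and A: "Vector_Spaces.linear scale scale A"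
    and AB: "\<And>b. b \<in> B \<Longrightarrow> A b \<in> span B" and x: "x \<in> span B"
  shows "representation B (A x) b' = (\<Sum>b\<in>B. representation B x b * representation B (A b) b')"
proof -
  have "A x = A (\<Sum>b\<in>B. scale (representation B x b) b)"
    using sum_representation_eq[OF B(2) x B(1) subset_refl] by simp
  also have "\<dots> = (\<Sum>b\<in>B. scale (representation B x b) (A b))"
    by (simp add: linear_map_sum[OF A] linear_map_scale[OF A])
  finally have Ax: "A x = (\<Sum>b\<in>B. scale (representation B x b) (A b))" .
  have "representation B (\<Sum>b\<in>B. scale (representation B x b) (A b)) =
      (\<lambda>b'. \<Sum>b\<in>B. representation B (scale (representation B x b) (A b)) b')"
    by (rule representation_sum[OF B(2)]) (simp add: AB span_scale)
  then show ?thesis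
    using Ax representation_scale[OF B(2) AB] by simp
qed

lemma basis_trace_commutator:
  assumes B: "finite B" "independent B"
    and A: "Vector_Spaces.linear scale scale A" and C: "Vector_Spaces.linear scale scale C"
    and AB: "\<And>b. b \<in> B \<Longrightarrow> A b \<in> span B" and CB: "\<And>b. b \<in> B \<Longrightarrow> C b \<in> span B"
  shows "basis_trace scale B (\<lambda>x. A (C x) - C (A x)) = 0"
proof -
  have "basis_trace scale B (\<lambda>x. A (C x)) =
      (\<Sum>b\<in>B. \<Sum>b'\<in>B. representation B (C b) b' * representation B (A b') b)"
    unfolding basis_trace_def using representation_linear_image[OF B A AB CB] by simp
  also have "\<dots> = (\<Sum>b'\<in>B. \<Sum>b\<in>B. representation B (A b') b * representation B (C b) b')"
    by (subst sum.swap) (simp add: mult.commute)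
  also have "\<dots> = basis_trace scale B (\<lambda>x. C (A x))"
    unfolding basis_trace_def using representation_linear_image[OF B C CB AB] by simp
  finally show ?thesis
    using basis_trace_diff[OF B(2)] linear_map_span_invariant[OF A AB] linear_map_span_invariant[OF C CB]
      AB CB by simp
qed

end

(* q^(L_0 - c/24) on W_[lam] with its exponential series cut off after N terms. Unlike q_op, it is
  linear on the whole space; it agrees with q_op on vectors killed by (L_0 - lam)^N. *)
definition q_trunc :: "(complex \<Rightarrow> 'w::ab_group_add \<Rightarrow> 'w) \<Rightarrow> ('w \<Rightarrow> 'w) \<Rightarrow> complex \<Rightarrow>
    complex \<Rightarrow> complex \<Rightarrow> nat \<Rightarrow> 'w \<Rightarrow> 'w" where
  "q_trunc s L0 c tau lam N w =
     s (exp (2 * pi * \<i> * tau * (lam - c / 24)))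
       (\<Sum>k<N. s ((2 * pi * \<i> * tau) ^ k / fact k) ((eig_shift s L0 lam ^^ k) w))"

context complex_vector_space
begin

lemma trace_on_eq_0I:
  assumes "fin_dim s S"
    and "\<And>B. finite B \<Longrightarrow> independent B \<Longrightarrow> span B = S \<Longrightarrow> basis_trace s B f = 0"
  shows "trace_on s S f = 0"
proof -
  obtain B0 where B0: "finite B0" "span B0 = S"
    using assms(1) unfolding fin_dim_def by blast
  obtain B where B: "B \<subseteq> B0" "independent B" "B0 \<subseteq> span B"
    using maximal_independent_subset[of B0] by blast
  have "span B = S"
    using span_mono[OF B(1)] span_minimal[OF B(3) subspace_span] B0(2) by blast
  then have "\<exists>t B. finite B \<and> independent B \<and> span B = S \<and> t = basis_trace s B f"
    using finite_subset[OF B(1) B0(1)] B(2) by blast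
  then show ?thesis
    unfolding trace_on_def basis_trace_def[symmetric]
    by (rule someI2_ex) (use assms(2) in blast)
qed

lemma q_op_eq_q_trunc:
  assumes f: "Vector_Spaces.linear s s f" and "(eig_shift s f lam ^^ N) w = 0"
  shows "q_op s f c tau lam w = q_trunc s f c tau lam N w"
proof -
  have "fsum (\<lambda>k. s ((2 * pi * \<i> * tau) ^ k / fact k) ((eig_shift s f lam ^^ k) w)) =
      (\<Sum>k<N. s ((2 * pi * \<i> * tau) ^ k / fact k) ((eig_shift s f lam ^^ k) w))"
    by (rule fsum_eq_sum) (use eig_shift_pow_vanish_mono[OF f assms(2)] in auto)
  then show ?thesis
    unfolding q_op_def q_trunc_def eig_shift_def[abs_def] by simp
qed

lemma q_trunc_commute:
  assumes "Vector_Spaces.linear s s T" "\<And>y. T (f y) = f (T y)"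
  shows "T (q_trunc s f c tau lam N w) = q_trunc s f c tau lam N (T w)"
  unfolding q_trunc_def
  by (simp add: linear_map_scale[OF assms(1)] linear_map_sum[OF assms(1)]
      eig_shift_pow_commute[of T f, OF assms])

lemma linear_q_trunc:
  assumes f: "Vector_Spaces.linear s s f"
  shows "Vector_Spaces.linear s s (q_trunc s f c tau lam N)"
  unfolding Vector_Spaces.linear_iff q_trunc_def
  by (simp add: vector_space_axioms linear_map_add[OF linear_eig_shift_pow[OF f]]
      linear_map_scale[OF linear_eig_shift_pow[OF f]] sum.distrib scale_right_distrib
      scale_sum_right ac_simps)

lemma q_trunc_gen_eig:
  assumes f: "Vector_Spaces.linear s s f" and "w \<in> gen_eig s f mu"
  shows "q_trunc s f c tau lam N w \<in> gen_eig s f mu"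
  by (rule gen_eig_invariant[OF linear_q_trunc[OF f] q_trunc_commute[of f f, OF f refl, symmetric] assms(2)])

end

section \<open>Consequences of the Borcherds identity\<close>

context complex_vector_space
begin

lemma fsum_scale_gchoose_0: "fsum (\<lambda>i::nat. s (0 gchoose i) (g i)) = g 0"
  by (subst fsum_eq_sum[of "{0}"]) (simp_all add: gbinomial_0_left)

lemma fsum_scale_gchoose_1: "fsum (\<lambda>i::nat. s (1 gchoose i) (g i)) = g 0 + g 1"
proof -
  have "(1::complex) gchoose i = 0" if "2 \<le> i" for i
    using binomial_gbinomial[of 1 i, where 'a=complex] that by (simp add: binomial_eq_0)
  then show ?thesis
    by (subst fsum_eq_sum[of "{0, 1}"]) (auto simp: numeral_2_eq_2)
qed

end

lemma weak_module_commutator: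
  assumes M: "is_weak_module s Y vac sX YX"
  shows "fsum (\<lambda>i::nat. sX (of_int m gchoose i) (YX (Y a (int i) b) (m + n - int i) w)) =
    YX a m (YX b n w) - YX b n (YX a m w)"
proof -
  interpret X: complex_vector_space sX
    using M unfolding is_weak_module_def complex_vector_space_def by blast
  have "fsum (\<lambda>i::nat. sX (of_int m gchoose i) (YX (Y a (0 + int i) b) (m + n - int i) w)) =
      fsum (\<lambda>i::nat. sX ((-1) ^ i * (of_int 0 gchoose i))
        (YX a (m + 0 - int i) (YX b (n + int i) w)
         - sX (sgn_pow 0) (YX b (n + 0 - int i) (YX a (m + int i) w))))"
    using M unfolding is_weak_module_def by blast
  also have "\<dots> = YX a m (YX b n w) - YX b n (YX a m w)"
    by (subst fsum_eq_sum[of "{0}"]) (simp_all add: gbinomial_0_left sgn_pow_def)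
  finally show ?thesis
    by simp
qed

lemma weak_module_commutator_0:
  assumes "is_weak_module s Y vac sX YX"
  shows "YX (Y a 0 b) n w = YX a 0 (YX b n w) - YX b n (YX a 0 w)"
proof -
  interpret X: complex_vector_space sX
    using assms unfolding is_weak_module_def complex_vector_space_def by blast
  show ?thesis
    using weak_module_commutator[OF assms, of 0] X.fsum_scale_gchoose_0 by simp
qed

lemma weak_module_commutator_1:
  assumes "is_weak_module s Y vac sX YX"
  shows "YX (Y a 0 b) (n + 1) w + YX (Y a 1 b) n w = YX a 1 (YX b n w) - YX b n (YX a 1 w)"
proof -
  interpret X: complex_vector_space sX
    using assms unfolding is_weak_module_def complex_vector_space_def by blast
  have "YX (Y a 0 b) (1 + n) w + YX (Y a 1 b) n w = YX a 1 (YX b n w) - YX b n (YX a 1 w)"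
    using weak_module_commutator[OF assms, of 1] X.fsum_scale_gchoose_1 by simp
  then show ?thesis
    by (simp only: add.commute[of 1 n])
qed

lemma intertwining_commutator:
  assumes I: "is_intertwining s Y vac om sU YU sW YW I"
  shows "fsum (\<lambda>i::nat. sW (of_int m gchoose i) (I (YU a (int i) u) (of_int m + n - of_nat i) w)) =
    YW a m (I u n w) - I u n (YW a m w)"
proof -
  have "vector_space sW"
    using I unfolding is_intertwining_def Vector_Spaces.linear_def by blast
  then interpret W: complex_vector_space sW
    unfolding complex_vector_space_def .
  have "fsum (\<lambda>i::nat. sW (of_int m gchoose i) (I (YU a (0 + int i) u) (of_int m + n - of_nat i) w)) =
      fsum (\<lambda>i::nat. sW ((-1) ^ i * (of_int 0 gchoose i))
        (YW a (m + 0 - int i) (I u (n + of_nat i) w)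
         - sW (sgn_pow 0) (I u (n + of_int 0 - of_nat i) (YW a (m + int i) w))))"
    using I unfolding is_intertwining_def by blast
  also have "\<dots> = YW a m (I u n w) - I u n (YW a m w)"
    by (subst fsum_eq_sum[of "{0}"]) (simp_all add: gbinomial_0_left sgn_pow_def)
  finally show ?thesis
    by simp
qed

lemma voa_L_minus_1_eq_vacuum_mode:
  assumes V: "is_voa s Y vac om c"
  shows "Y om 0 a = Y a (-2) vac"
proof -
  interpret complex_vector_space s
    using V unfolding is_voa_def complex_vector_space_def by blast
  have "Y (Y om 0 a) (-1) vac = s (- of_int (-1)) (Y a (-1 - 1) vac)"
    using V unfolding is_voa_def by blast
  moreover have "Y (Y om 0 a) (-1) vac = Y om 0 a"
    using V unfolding is_voa_def by blast
  ultimately show ?thesis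
    by simp
qed

lemma weak_module_L_minus_1_mode:
  assumes V: "is_voa s Y vac om c" and M: "is_weak_module s Y vac sX YX"
  shows "YX (Y om 0 a) 1 w = - YX a 0 w"
proof -
  interpret X: complex_vector_space sX
    using M unfolding is_weak_module_def complex_vector_space_def by blast
  have creation: "Y a (-1) vac = a" "\<And>n. n \<ge> 0 \<Longrightarrow> Y a n vac = 0"
    using V unfolding is_voa_def by blast+
  have vacuum_X: "\<And>n w. YX vac n w = (if n = -1 then w else 0)"
    using M unfolding is_weak_module_def by blast
  have zero_X: "YX 0 n w = 0" "YX a n 0 = 0" for a n w
    using M linear_map_zero unfolding is_weak_module_def by blast+
  have "fsum (\<lambda>i::nat. sX (of_int 2 gchoose i) (YX (Y a (-2 + int i) vac) (2 + (-1) - int i) w)) =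
      fsum (\<lambda>i::nat. sX ((-1) ^ i * (of_int (-2) gchoose i))
        (YX a (2 + (-2) - int i) (YX vac (-1 + int i) w)
         - sX (sgn_pow (-2)) (YX vac (-1 + (-2) - int i) (YX a (2 + int i) w))))"
    using M unfolding is_weak_module_def by blast
  also have "\<dots> = YX a 0 w"
    by (subst fsum_eq_sum[of "{0}"]) (simp_all add: vacuum_X zero_X)
  finally have borcherds:
    "fsum (\<lambda>i::nat. sX (2 gchoose i) (YX (Y a (-2 + int i) vac) (1 - int i) w)) = YX a 0 w"
    by simp
  have "fsum (\<lambda>i::nat. sX (2 gchoose i) (YX (Y a (-2 + int i) vac) (1 - int i) w)) =
      YX (Y a (-2) vac) 1 w + sX 2 (YX a 0 w)"
    by (subst fsum_eq_sum[of "{0, 1}"]) (auto simp: creation zero_X numeral_2_eq_2)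
  then have "YX (Y a (-2) vac) 1 w + (YX a 0 w + YX a 0 w) = YX a 0 w"
    using borcherds X.scale_left_distrib[of 1 1] by (simp add: one_add_one)
  then show ?thesis
    using voa_L_minus_1_eq_vacuum_mode[OF V] by (simp add: eq_neg_iff_add_eq_0)
qed

lemma weak_module_L0_commute_V1:
  assumes V: "is_voa s Y vac om c" and M: "is_weak_module s Y vac sX YX" and a: "a \<in> V1 Y s om"
  shows "YX om 1 (YX a 0 w) = YX a 0 (YX om 1 w)"
proof -
  interpret complex_vector_space s
    using V unfolding is_voa_def complex_vector_space_def by blast
  have "Y om 1 a = a"
    using a unfolding V1_def by simp
  then show ?thesis
    using weak_module_commutator_1[OF M, of om a 0 w] weak_module_L_minus_1_mode[OF V M] by simp
qed

lemma intertwining_commutator_0: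
  assumes I: "is_intertwining s Y vac om sU YU sW YW I"
  shows "I (YU a 0 u) n w = YW a 0 (I u n w) - I u n (YW a 0 w)"
proof -
  have "vector_space sW"
    using I unfolding is_intertwining_def Vector_Spaces.linear_def by blast
  then interpret W: complex_vector_space sW
    unfolding complex_vector_space_def .
  show ?thesis
    using intertwining_commutator[OF I, of 0] W.fsum_scale_gchoose_0 by simp
qed

lemma intertwining_eig_shift:
  assumes I: "is_intertwining s Y vac om sU YU sW YW I"
  shows "eig_shift sW (YW om 1) lam (I u (lam' - 1) w) =
    I (eig_shift sU (YU om 1) lam' u) (lam' - 1) w + I u (lam' - 1) (eig_shift sW (YW om 1) lam w)"
proof -
  have "vector_space sW"
    using I unfolding is_intertwining_def Vector_Spaces.linear_def by blast
  then interpret W: complex_vector_space sW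
    unfolding complex_vector_space_def .
  let ?n = "lam' - 1"
  have lin_u: "Vector_Spaces.linear sU sW (\<lambda>u. I u ?n w)"
    and lin_w: "Vector_Spaces.linear sW sW (I u ?n)"
    using I unfolding is_intertwining_def by blast+
  have "I (YU om 0 u) (?n + 1) w = sW (- (?n + 1)) (I u ?n w)"
    using I unfolding is_intertwining_def by (metis add_diff_cancel_right')
  then have "YW om 1 (I u ?n w) - I u ?n (YW om 1 w) = sW (- lam') (I u ?n w) + I (YU om 1 u) ?n w"
    using intertwining_commutator[OF I, of 1 om u ?n w] W.fsum_scale_gchoose_1 by (simp add: add.commute)
  then show ?thesis
    unfolding eig_shift_def linear_map_diff[OF lin_u] linear_map_scale[OF lin_u]
      linear_map_diff[OF lin_w] linear_map_scale[OF lin_w]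
    by (simp add: algebra_simps)
qed

(* By intertwining_eig_shift, L_0 - lam acts on I(u, lam' - 1) w by a Leibniz rule, so the
  nilpotency orders add up. *)
lemma intertwining_eig_shift_pow_eq_0:
  assumes I: "is_intertwining s Y vac om sU YU sW YW I" and W: "is_weak_module s Y vac sW YW"
    and "(eig_shift sU (YU om 1) lam' ^^ p) u = 0" "(eig_shift sW (YW om 1) lam ^^ q) w = 0"
  shows "(eig_shift sW (YW om 1) lam ^^ (p + q)) (I u (lam' - 1) w) = 0"
proof -
  let ?DU = "eig_shift sU (YU om 1) lam'" and ?DW = "eig_shift sW (YW om 1) lam"
  interpret W: complex_vector_space sW
    using W unfolding is_weak_module_def complex_vector_space_def by blast
  have DW: "Vector_Spaces.linear sW sW (?DW ^^ N)" for N
    using W W.linear_eig_shift_pow unfolding is_weak_module_def by blast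
  have zero_u: "I 0 n w = 0" and zero_w: "I u n 0 = 0" for u n w
    using I linear_map_zero unfolding is_intertwining_def by blast+
  show ?thesis
    using assms(3,4)
  proof (induction "p + q" arbitrary: p q u w)
    case 0
    then show ?case
      by (simp add: zero_u)
  next
    case (Suc N)
    show ?case
    proof (cases "p = 0 \<or> q = 0")
      case True
      then have "I u (lam' - 1) w = 0"
        using Suc.prems zero_u zero_w by auto
      then show ?thesis
        using linear_map_zero[OF DW] by simp
    next
      case False
      then obtain p' q' where p: "p = Suc p'" and q: "q = Suc q'"
        by (metis not0_implies_Suc)
      have "(?DW ^^ (p + q)) (I u (lam' - 1) w) = (?DW ^^ N) (?DW (I u (lam' - 1) w))"
        unfolding Suc.hyps(2)[symmetric] funpow_Suc_right comp_apply ..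
      also have "\<dots> = (?DW ^^ N) (I (?DU u) (lam' - 1) w) + (?DW ^^ N) (I u (lam' - 1) (?DW w))"
        by (simp add: intertwining_eig_shift[OF I] linear_map_add[OF DW])
      also have "(?DW ^^ N) (I (?DU u) (lam' - 1) w) = 0"
        using Suc.hyps Suc.prems p by (simp add: funpow_swap1)
      also have "(?DW ^^ N) (I u (lam' - 1) (?DW w)) = 0"
        using Suc.hyps Suc.prems q by (simp add: funpow_swap1)
      finally show ?thesis
        by simp
    qed
  qed
qed

lemma intertwining_gen_eig:
  assumes "is_intertwining s Y vac om sU YU sW YW I" "is_weak_module s Y vac sW YW"
    and "u \<in> gen_eig sU (YU om 1) lam'" "w \<in> gen_eig sW (YW om 1) lam"
  shows "I u (lam' - 1) w \<in> gen_eig sW (YW om 1) lam"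
  using assms intertwining_eig_shift_pow_eq_0 unfolding gen_eig_eig_shift by blast

section \<open>Modules over V_1\<close>

context complex_vector_space
begin

context
  fixes A :: "'a set" and act :: "'a \<Rightarrow> 'b \<Rightarrow> 'b" and br :: "'a \<Rightarrow> 'a \<Rightarrow> 'a"
  assumes act_linear: "\<And>a. a \<in> A \<Longrightarrow> Vector_Spaces.linear s s (act a)"
    and bracket_closed: "\<And>a b. a \<in> A \<Longrightarrow> b \<in> A \<Longrightarrow> br a b \<in> A"
    and act_bracket: "\<And>a b x. a \<in> A \<Longrightarrow> b \<in> A \<Longrightarrow> act (br a b) x = act a (act b x) - act b (act a x)"
begin

lemma is_submod_span_action:
  assumes S: "is_submod s A act S"
  shows "is_submod s A act (span {act a x | a x. a \<in> A \<and> x \<in> S})"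
proof -
  let ?T = "span {act a x | a x. a \<in> A \<and> x \<in> S}"
  have S_closed: "\<And>a x. a \<in> A \<Longrightarrow> x \<in> S \<Longrightarrow> act a x \<in> S"
    using S unfolding is_submod_def by blast
  have "act b y \<in> ?T" if b: "b \<in> A" and "y \<in> ?T" for b y
    using \<open>y \<in> ?T\<close>
  proof (induction rule: span_induct_alt)
    case base
    show ?case
      using linear_map_zero[OF act_linear[OF b]] span_zero by simp
  next
    case (step c g y)
    then obtain a x where a: "a \<in> A" and x: "x \<in> S" and g: "g = act a x"
      by blast
    have "act b g = act a (act b x) + act (br b a) x"
      using act_bracket[OF b a] g by simp
    moreover have "act a (act b x) \<in> ?T"
      using a S_closed[OF b x] by (intro span_base) blast
    moreover have "act (br b a) x \<in> ?T"
      using bracket_closed[OF b a] x by (intro span_base) blast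
    ultimately have "act b g \<in> ?T"
      by (simp add: span_add)
    then show ?case
      using step.IH linear_map_add[OF act_linear[OF b]] linear_map_scale[OF act_linear[OF b]]
      by (simp add: span_add span_scale)
  qed
  then show ?thesis
    unfolding is_submod_def by simp
qed

lemma simple_submod_eq_span_action:
  assumes S: "is_simple_submod s A act S" and nontrivial: "\<exists>a\<in>A. \<exists>x\<in>S. act a x \<noteq> 0"
  shows "S = span {act a x | a x. a \<in> A \<and> x \<in> S}"
proof -
  let ?T = "span {act a x | a x. a \<in> A \<and> x \<in> S}"
  have S_submod: "is_submod s A act S"
    using S unfolding is_simple_submod_def by blast
  then have "?T \<subseteq> S"
    unfolding is_submod_def by (intro span_minimal) blast+
  moreover have "is_submod s A act ?T"
    by (rule is_submod_span_action[OF S_submod])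
  moreover have "\<forall>T. is_submod s A act T \<and> T \<subseteq> S \<longrightarrow> T = {0} \<or> T = S"
    using S unfolding is_simple_submod_def by blast
  ultimately have "?T = {0} \<or> ?T = S"
    by blast
  moreover have "?T \<noteq> {0}"
  proof -
    obtain a x where "a \<in> A" "x \<in> S" "act a x \<noteq> 0"
      using nontrivial by blast
    moreover have "act a x \<in> ?T"
      using \<open>a \<in> A\<close> \<open>x \<in> S\<close> by (intro span_base) blast
    ultimately show ?thesis
      by force
  qed
  ultimately show ?thesis
    by argo
qed

lemma nontriv_part_subset_span_action: "nontriv_part s A act M \<subseteq> span {act a x | a x. a \<in> A}"
  unfolding nontriv_part_def
proof (intro span_minimal subspace_span Union_least)
  fix S
  assume "S \<in> {S. is_simple_submod s A act S \<and> S \<subseteq> M \<and> (\<exists>a\<in>A. \<exists>x\<in>S. act a x \<noteq> 0)}"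
  then have "S = span {act a x | a x. a \<in> A \<and> x \<in> S}"
    using simple_submod_eq_span_action by blast
  also have "\<dots> \<subseteq> span {act a x | a x. a \<in> A}"
    by (rule span_mono) blast
  finally show "S \<subseteq> span {act a x | a x. a \<in> A}" .
qed

end

end

section \<open>Graded traces of zero modes\<close>

locale voa_intertwining =
  fixes s :: "complex \<Rightarrow> 'v::ab_group_add \<Rightarrow> 'v" and Y :: "'v \<Rightarrow> int \<Rightarrow> 'v \<Rightarrow> 'v"
    and vac om :: 'v and c :: complex
    and sU :: "complex \<Rightarrow> 'u::ab_group_add \<Rightarrow> 'u" and YU :: "'v \<Rightarrow> int \<Rightarrow> 'u \<Rightarrow> 'u"
    and sW :: "complex \<Rightarrow> 'w::ab_group_add \<Rightarrow> 'w" and YW :: "'v \<Rightarrow> int \<Rightarrow> 'w \<Rightarrow> 'w"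
    and I :: "'u \<Rightarrow> complex \<Rightarrow> 'w \<Rightarrow> 'w"
  assumes voa: "is_voa s Y vac om c"
    and module_U: "is_module s Y vac om sU YU"
    and module_W: "is_module s Y vac om sW YW"
    and intertwining: "is_intertwining s Y vac om sU YU sW YW I"
begin

lemma weak_module_U: "is_weak_module s Y vac sU YU"
  and weak_module_W: "is_weak_module s Y vac sW YW"
  using module_U module_W unfolding is_module_def by blast+

sublocale U: complex_vector_space sU
  using weak_module_U unfolding is_weak_module_def complex_vector_space_def by blast

sublocale W: complex_vector_space sW
  using weak_module_W unfolding is_weak_module_def complex_vector_space_def by blast

lemma decomp_U: "gen_eig_decomp sU (YU om 1)"
  using module_U unfolding is_module_def by blast

lemma fin_dim_W: "fin_dim sW (gen_eig sW (YW om 1) lam)"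
  using module_W unfolding is_module_def by blast

lemma linear_mode_U: "Vector_Spaces.linear sU sU (YU a n)"
  using weak_module_U unfolding is_weak_module_def by blast

lemma linear_mode_W: "Vector_Spaces.linear sW sW (YW a n)"
  using weak_module_W unfolding is_weak_module_def by blast

lemma linear_intertwining_left: "Vector_Spaces.linear sU sW (\<lambda>u. I u x w)"
  using intertwining unfolding is_intertwining_def by blast

lemma linear_intertwining_right: "Vector_Spaces.linear sW sW (I u x)"
  using intertwining unfolding is_intertwining_def by blast

lemma zero_mode_L0_commute_U: "a \<in> V1 Y s om \<Longrightarrow> YU a 0 (YU om 1 y) = YU om 1 (YU a 0 y)"
  using weak_module_L0_commute_V1[OF voa weak_module_U] by simp

lemma zero_mode_L0_commute_W: "a \<in> V1 Y s om \<Longrightarrow> YW a 0 (YW om 1 w) = YW om 1 (YW a 0 w)"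
  using weak_module_L0_commute_V1[OF voa weak_module_W] by simp

lemma zero_mode_gen_eig_U:
  "a \<in> V1 Y s om \<Longrightarrow> y \<in> gen_eig sU (YU om 1) lam \<Longrightarrow> YU a 0 y \<in> gen_eig sU (YU om 1) lam"
  by (rule U.gen_eig_invariant[of "YU a 0" "YU om 1", OF linear_mode_U zero_mode_L0_commute_U])

lemma zero_mode_gen_eig_W:
  "a \<in> V1 Y s om \<Longrightarrow> w \<in> gen_eig sW (YW om 1) lam \<Longrightarrow> YW a 0 w \<in> gen_eig sW (YW om 1) lam"
  by (rule W.gen_eig_invariant[of "YW a 0" "YW om 1", OF linear_mode_W zero_mode_L0_commute_W])

lemma gen_comp_in_span_zero_modes:
  assumes "u \<in> U.span {YU a 0 y | a y. a \<in> V1 Y s om}"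
  shows "gen_comp sU (YU om 1) u lam \<in>
    U.span {YU a 0 y | a y. a \<in> V1 Y s om \<and> y \<in> gen_eig sU (YU om 1) lam}"
  using assms
proof (induction rule: U.span_induct_alt)
  case base
  then show ?case
    using linear_map_zero[OF U.linear_gen_comp[OF linear_mode_U decomp_U]] U.span_zero by simp
next
  case (step c g y)
  then obtain a y0 where a: "a \<in> V1 Y s om" and g: "g = YU a 0 y0"
    by blast
  have "gen_comp sU (YU om 1) g lam = YU a 0 (gen_comp sU (YU om 1) y0 lam)"
    unfolding g
    by (rule U.gen_comp_commute[OF linear_mode_U decomp_U linear_mode_U zero_mode_L0_commute_U[OF a]])
  then have "gen_comp sU (YU om 1) g lam \<in>
      U.span {YU a 0 y | a y. a \<in> V1 Y s om \<and> y \<in> gen_eig sU (YU om 1) lam}"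
    using a U.gen_comp_in_gen_eig[OF linear_mode_U decomp_U] by (intro U.span_base) blast
  moreover note linear_comp = U.linear_gen_comp[OF linear_mode_U decomp_U, of lam]
  ultimately show ?case
    using step.IH
    by (simp add: linear_map_add[OF linear_comp] linear_map_scale[OF linear_comp] U.span_add U.span_scale)
qed

context
  fixes B :: "'w set" and Q :: "'w \<Rightarrow> 'w" and lam :: complex
  assumes basis: "finite B" "W.independent B" "W.span B = gen_eig sW (YW om 1) lam"
    and linear_Q: "Vector_Spaces.linear sW sW Q"
    and zero_mode_commute_Q: "\<And>a w. a \<in> V1 Y s om \<Longrightarrow> YW a 0 (Q w) = Q (YW a 0 w)"
    and gen_eig_Q: "\<And>w. w \<in> gen_eig sW (YW om 1) lam \<Longrightarrow> Q w \<in> gen_eig sW (YW om 1) lam"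
begin

lemma basis_gen_eig: "b \<in> B \<Longrightarrow> b \<in> gen_eig sW (YW om 1) lam"
  using W.span_base basis(3) by blast

lemma intertwining_Q_in_span_basis:
  "x \<in> gen_eig sU (YU om 1) lam' \<Longrightarrow> b \<in> B \<Longrightarrow> I x (lam' - 1) (Q b) \<in> W.span B"
  using intertwining_gen_eig[OF intertwining weak_module_W _ gen_eig_Q[OF basis_gen_eig]] basis(3)
  by simp

lemma basis_trace_intertwining_zero_mode:
  assumes a: "a \<in> V1 Y s om" and y: "y \<in> gen_eig sU (YU om 1) lam'"
  shows "basis_trace sW B (\<lambda>w. I (YU a 0 y) (lam' - 1) (Q w)) = 0"
proof -
  let ?A = "YW a 0" and ?C = "\<lambda>w. I y (lam' - 1) (Q w)"
  have "I (YU a 0 y) (lam' - 1) (Q w) = ?A (?C w) - ?C (?A w)" for w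
    using intertwining_commutator_0[OF intertwining] zero_mode_commute_Q[OF a] by simp
  then have "basis_trace sW B (\<lambda>w. I (YU a 0 y) (lam' - 1) (Q w)) =
      basis_trace sW B (\<lambda>w. ?A (?C w) - ?C (?A w))"
    by simp
  also have "\<dots> = 0"
  proof (rule W.basis_trace_commutator[OF basis(1,2) linear_mode_W])
    show "Vector_Spaces.linear sW sW ?C"
      using Vector_Spaces.linear_compose[OF linear_Q linear_intertwining_right] by (simp add: o_def)
    show "?A b \<in> W.span B" if "b \<in> B" for b
      using zero_mode_gen_eig_W[OF a basis_gen_eig[OF that]] basis(3) by simp
    show "?C b \<in> W.span B" if "b \<in> B" for b
      by (rule intertwining_Q_in_span_basis[OF y that])
  qed
  finally show ?thesis .
qed

lemma basis_trace_intertwining_span_zero_modes: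
  assumes "z \<in> U.span {YU a 0 y | a y. a \<in> V1 Y s om \<and> y \<in> gen_eig sU (YU om 1) lam'}"
  shows "basis_trace sW B (\<lambda>w. I z (lam' - 1) (Q w)) = 0"
proof -
  let ?Ul = "gen_eig sU (YU om 1) lam'"
  have "z \<in> ?Ul \<and> basis_trace sW B (\<lambda>w. I z (lam' - 1) (Q w)) = 0"
    using assms
  proof (induction rule: U.span_induct_alt)
    case base
    have "I 0 (lam' - 1) w = 0" for w
      using linear_map_zero[OF linear_intertwining_left] by simp
    then show ?case
      using U.subspace_0[OF U.subspace_gen_eig[OF linear_mode_U]]
      by (simp add: basis_trace_def W.representation_zero)
  next
    case (step c g y)
    then obtain a y0 where a: "a \<in> V1 Y s om" and y0: "y0 \<in> ?Ul" and g: "g = YU a 0 y0"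
      by blast
    have g_Ul: "g \<in> ?Ul"
      unfolding g by (rule zero_mode_gen_eig_U[OF a y0])
    have "I (sU c g + y) (lam' - 1) w = sW c (I g (lam' - 1) w) + I y (lam' - 1) w" for w
      using linear_map_add[OF linear_intertwining_left] linear_map_scale[OF linear_intertwining_left]
      by simp
    then have "basis_trace sW B (\<lambda>w. I (sU c g + y) (lam' - 1) (Q w)) =
        c * basis_trace sW B (\<lambda>w. I g (lam' - 1) (Q w)) + basis_trace sW B (\<lambda>w. I y (lam' - 1) (Q w))"
      using W.basis_trace_add[OF basis(2)] W.basis_trace_scale[OF basis(2)]
        intertwining_Q_in_span_basis g_Ul step.IH W.span_scale
      by simp
    also have "\<dots> = 0"
      using basis_trace_intertwining_zero_mode[OF a y0] g step.IH by simp
    finally show ?case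
      using g_Ul step.IH U.subspace_gen_eig[OF linear_mode_U]
      by (simp add: U.subspace_add U.subspace_scale)
  qed
  then show ?thesis ..
qed

end

lemma torus_1pt_zero_span_zero_modes:
  assumes u: "u \<in> U.span {YU a 0 y | a y. a \<in> V1 Y s om}"
  shows "torus_1pt_zero sU YU om c sW YW I u"
  unfolding torus_1pt_zero_def
proof (intro allI W.trace_on_eq_0I[OF fin_dim_W])
  fix lam tau B
  assume B: "finite B" "W.independent B" "W.span B = gen_eig sW (YW om 1) lam"
  let ?u = "gen_comp sU (YU om 1) u"
  obtain N where N: "\<And>b. b \<in> B \<Longrightarrow> (eig_shift sW (YW om 1) lam ^^ N) b = 0"
    using W.gen_eig_common_exponent[OF linear_mode_W B(1)] W.span_superset B(3) by blast
  let ?Q = "q_trunc sW (YW om 1) c tau lam N"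
  have Q_commute: "YW a 0 (?Q w) = ?Q (YW a 0 w)" if "a \<in> V1 Y s om" for a w
    by (rule W.q_trunc_commute[of "YW a 0" "YW om 1", OF linear_mode_W zero_mode_L0_commute_W[OF that]])
  note Q = W.linear_q_trunc[OF linear_mode_W] Q_commute W.q_trunc_gen_eig[OF linear_mode_W]
  have "basis_trace sW B (\<lambda>w. zero_mode sU YU om I u (q_op sW (YW om 1) c tau lam w)) =
      basis_trace sW B (\<lambda>w. \<Sum>l\<in>{l. ?u l \<noteq> 0}. I (?u l) (l - 1) (?Q w))"
    by (rule W.basis_trace_cong) (simp add: zero_mode_def W.q_op_eq_q_trunc[OF linear_mode_W N])
  also have "\<dots> = (\<Sum>l\<in>{l. ?u l \<noteq> 0}. basis_trace sW B (\<lambda>w. I (?u l) (l - 1) (?Q w)))"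
    by (rule W.basis_trace_sum[OF B(2)])
      (rule intertwining_Q_in_span_basis[OF B Q U.gen_comp_in_gen_eig[OF linear_mode_U decomp_U]])
  also have "\<dots> = 0"
    using basis_trace_intertwining_span_zero_modes[OF B Q gen_comp_in_span_zero_modes[OF u]] by simp
  finally show "basis_trace sW B (\<lambda>w. zero_mode sU YU om I u (q_op sW (YW om 1) c tau lam w)) = 0" .
qed

end

theorem proposition2p8:
  fixes s :: "complex \<Rightarrow> 'v::ab_group_add \<Rightarrow> 'v" and Y :: "'v \<Rightarrow> int \<Rightarrow> 'v \<Rightarrow> 'v"
    and vac om :: 'v and c :: complex
    and sU :: "complex \<Rightarrow> 'u::ab_group_add \<Rightarrow> 'u" and YU :: "'v \<Rightarrow> int \<Rightarrow> 'u \<Rightarrow> 'u"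
    and sW :: "complex \<Rightarrow> 'w::ab_group_add \<Rightarrow> 'w" and YW :: "'v \<Rightarrow> int \<Rightarrow> 'w \<Rightarrow> 'w"
    and I :: "'u \<Rightarrow> complex \<Rightarrow> 'w \<Rightarrow> 'w"
    and m :: complex and u :: 'u
  assumes "is_voa s Y vac om c"
    and "is_module s Y vac om sU YU"
    and "gen_eig_decomp sU (L_sq sU YU vac om c 0)"
    and "V1_reductive_lie s Y om"
    and "is_semisimple sU (V1 Y s om) (\<lambda>a x. YU a 0 x) (U_sq sU YU vac om c m)"
    and "u \<in> nontriv_part sU (V1 Y s om) (\<lambda>a x. YU a 0 x) (U_sq sU YU vac om c m)"
    and "is_module s Y vac om sW YW"
    and "is_intertwining s Y vac om sU YU sW YW I"
  shows "torus_1pt_zero sU YU om c sW YW I u"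
proof -
  interpret voa_intertwining s Y vac om c sU YU sW YW I
    using assms(1,2,7,8) by unfold_locales
  have bracket_closed: "\<And>a b. a \<in> V1 Y s om \<Longrightarrow> b \<in> V1 Y s om \<Longrightarrow> Y a 0 b \<in> V1 Y s om"
    using assms(4) unfolding V1_reductive_lie_def by blast
  have "u \<in> U.span {YU a 0 y | a y. a \<in> V1 Y s om}"
    using U.nontriv_part_subset_span_action[where act = "\<lambda>a x. YU a 0 x" and br = "\<lambda>a b. Y a 0 b",
        OF linear_mode_U bracket_closed weak_module_commutator_0[OF weak_module_U]] assms(6)
    by blast
  then show ?thesis
    by (rule torus_1pt_zero_span_zero_modes)
qed

end
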